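(* Let $P\in\mathbb{R}_+^{n\times n}$ be sub-stochastic, $w\in\mathbb{R}^n_+$, and $c\in\mathbb{R}^n$, and let $\mathcal X=\{x\in\mathbb{R}^n:\,x=S_0^w(P'x+c)\}$ be the set of equilibria. Let $x(t)$ be the sequence defined by $x(t+1)=S_0^w(P'x(t)+c)$, $t\ge0$, with $x(0)=x_0$. Then: (i) $\mathcal X$ admits a minimal element $\underline x$ and a maximal element $\overline x$ (with respect to the entrywise order on $\mathbb{R}^n$); (ii) if $x_0=0$, then $x(t)\to\underline x$ as $t\to+\infty$; (iii) if $x_0=w$, then $x(t)\to\overline x$ as $t\to+\infty$; (iv) writing $\underline x(c)$ and $\overline x(c)$ for the minimal and maximal equilibria as functions of $c$ (with $P,w$ fixed), the maps $c\mapsto\underline x(c)$ and $c\mapsto\overline x(c)$ are monotone nondecreasing from $\mathbb{R}^n$ to $\mathcal L_0^w=\{x:\,0\le x\le w\}$.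
   Context: A nonnegative matrix $P\in\mathbb{R}_+^{n\times n}$ is sub-stochastic if $P\mathbbm{1}\le\mathbbm{1}$ (this includes stochastic matrices, $P\mathbbm{1}=\mathbbm{1}$). For $w\in\mathbb{R}^n_+$, $(S_0^w(x))_i=\min\{\max\{x_i,0\},w_i\}$. $P'$ is the transpose of $P$. Vectors are ordered entrywise. *)

theory Defs
  imports "HOL-Analysis.Analysis"
begin

definition sub_stochastic :: "real^'n^'n \<Rightarrow> bool" where
  "sub_stochastic P \<longleftrightarrow> (\<forall>i j. 0 \<le> P $ i $ j) \<and> P *v (vec 1) \<le> vec 1"

definition sat0 :: "real^'n \<Rightarrow> real^'n \<Rightarrow> real^'n" where
  "sat0 w x = (\<chi> i. min (max (x $ i) 0) (w $ i))"

definition dyn :: "real^'n^'n \<Rightarrow> real^'n \<Rightarrow> real^'n \<Rightarrow> real^'n \<Rightarrow> real^'n" where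
  "dyn P w c x = sat0 w (transpose P *v x + c)"

definition equilibria :: "real^'n^'n \<Rightarrow> real^'n \<Rightarrow> real^'n \<Rightarrow> (real^'n) set" where
  "equilibria P w c = {x. x = dyn P w c x}"

definition min_eq :: "real^'n^'n \<Rightarrow> real^'n \<Rightarrow> real^'n \<Rightarrow> real^'n" where
  "min_eq P w c = (LEAST x. x \<in> equilibria P w c)"

definition max_eq :: "real^'n^'n \<Rightarrow> real^'n \<Rightarrow> real^'n \<Rightarrow> real^'n" where
  "max_eq P w c = (GREATEST x. x \<in> equilibria P w c)"

end

theory Submission imports Defs begin

(* The map f x = S_0^w(P'x + c) is monotone (as P \<ge> 0), continuous, and maps everything
   into the box [0, w]. Hence its iterates from 0 increase and those from w decrease; being
   bounded they converge, and by continuity the limits are fixed points. By monotonicity every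
   z \<ge> 0 with f z \<le> z lies above all iterates from 0, and every z \<le> w with z \<le> f z
   below all iterates from w, so the two limits are the least and greatest equilibria.
   Raising c raises f, so the least equilibrium for the larger c is such a z for the smaller
   c; dually for the greatest. *)

lemma incseq_funpow:
  fixes f :: "'a::order \<Rightarrow> 'a"
  assumes "mono f" and "a \<le> f a"
  shows "incseq (\<lambda>t. (f ^^ t) a)"
proof (rule incseq_SucI)
  fix t
  have "(f ^^ t) a \<le> (f ^^ t) (f a)" using funpow_mono assms by blast
  then show "(f ^^ t) a \<le> (f ^^ Suc t) a" by (simp add: funpow_swap1)
qed

lemma decseq_funpow:
  fixes f :: "'a::order \<Rightarrow> 'a"
  assumes "mono f" and "f b \<le> b"
  shows "decseq (\<lambda>t. (f ^^ t) b)"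
proof (rule decseq_SucI)
  fix t
  have "(f ^^ t) (f b) \<le> (f ^^ t) b" using funpow_mono assms by blast
  then show "(f ^^ Suc t) b \<le> (f ^^ t) b" by (simp add: funpow_swap1)
qed

lemma funpow_le_prefixpoint:
  fixes f :: "'a::order \<Rightarrow> 'a"
  assumes "mono f" and "a \<le> z" and "f z \<le> z"
  shows "(f ^^ t) a \<le> z"
proof (induction t)
  case (Suc t)
  have "f ((f ^^ t) a) \<le> f z" using \<open>mono f\<close> Suc.IH by (rule monoD)
  then show ?case using \<open>f z \<le> z\<close> by simp
qed (simp add: assms)

lemma funpow_ge_postfixpoint:
  fixes f :: "'a::order \<Rightarrow> 'a"
  assumes "mono f" and "z \<le> b" and "z \<le> f z"
  shows "z \<le> (f ^^ t) b"
proof (induction t)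
  case (Suc t)
  have "f z \<le> f ((f ^^ t) b)" using \<open>mono f\<close> Suc.IH by (rule monoD)
  then show ?case using \<open>z \<le> f z\<close> by simp
qed (simp add: assms)

lemma recursive_seq_eq_funpow:
  assumes "x 0 = a" and "\<forall>t. x (Suc t) = f (x t)"
  shows "x = (\<lambda>t. (f ^^ t) a)"
proof
  show "x t = (f ^^ t) a" for t by (induction t) (simp_all add: assms)
qed

lemma fixpoint_of_limit_of_iterates:
  fixes f :: "'a::t2_space \<Rightarrow> 'a"
  assumes "isCont f L" and "(\<lambda>t. (f ^^ t) a) \<longlonglongrightarrow> L"
  shows "f L = L"
proof (rule LIMSEQ_unique)
  show "(\<lambda>t. (f ^^ Suc t) a) \<longlonglongrightarrow> L" using assms(2) by (rule LIMSEQ_Suc)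
  show "(\<lambda>t. (f ^^ Suc t) a) \<longlonglongrightarrow> f L"
    using isCont_tendsto_compose[OF assms] by simp
qed

lemma incseq_bounded_convergent_vec:
  fixes X :: "nat \<Rightarrow> real^'n"
  assumes "incseq X" and "\<And>t. X t \<le> b"
  shows "convergent X"
proof -
  have "\<exists>l. (\<lambda>t. X t $ i) \<longlonglongrightarrow> l" for i
  proof (rule incseq_convergent)
    show "incseq (\<lambda>t. X t $ i)"
      using assms(1) by (simp add: incseq_def less_eq_vec_def)
    show "\<forall>t. X t $ i \<le> b $ i"
      using assms(2) by (simp add: less_eq_vec_def)
  qed blast
  then obtain l where "\<And>i. (\<lambda>t. X t $ i) \<longlonglongrightarrow> l i" by metis
  then have "X \<longlonglongrightarrow> (\<chi> i. l i)" by (intro vec_tendstoI) simp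
  then show ?thesis by (rule convergentI)
qed

lemma decseq_bounded_convergent_vec:
  fixes X :: "nat \<Rightarrow> real^'n"
  assumes "decseq X" and "\<And>t. a \<le> X t"
  shows "convergent X"
proof -
  have "convergent (\<lambda>t. - X t)"
  proof (rule incseq_bounded_convergent_vec)
    show "incseq (\<lambda>t. - X t)" using assms(1) by (simp add: decseq_eq_incseq)
    show "- X t \<le> - a" for t using assms(2) by simp
  qed
  then show ?thesis using convergent_minus_iff by blast
qed

lemma LIMSEQ_le_eucl:
  fixes X :: "nat \<Rightarrow> 'a::ordered_euclidean_space"
  assumes "X \<longlonglongrightarrow> L" and "\<And>t. X t \<le> z"
  shows "L \<le> z"
  using Lim_in_closed_set[OF closed_eucl_atMost _ _ assms(1)] assms(2) by simp

lemma LIMSEQ_ge_eucl: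
  fixes X :: "nat \<Rightarrow> 'a::ordered_euclidean_space"
  assumes "X \<longlonglongrightarrow> L" and "\<And>t. z \<le> X t"
  shows "z \<le> L"
  using Lim_in_closed_set[OF closed_eucl_atLeast _ _ assms(1)] assms(2) by simp

lemma least_fixpoint_as_limit_of_iterates:
  fixes f :: "real^'n \<Rightarrow> real^'n"
  assumes mono: "mono f" and cont: "\<And>x. isCont f x"
    and "a \<le> f a" and "a \<le> b" and "f b \<le> b"
  obtains L where "(\<lambda>t. (f ^^ t) a) \<longlonglongrightarrow> L" and "f L = L"
    and "\<And>z. a \<le> z \<Longrightarrow> f z \<le> z \<Longrightarrow> L \<le> z"
proof -
  have below: "(f ^^ t) a \<le> z" if "a \<le> z" and "f z \<le> z" for t z
    using mono that by (rule funpow_le_prefixpoint)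
  have "convergent (\<lambda>t. (f ^^ t) a)"
    using incseq_funpow[OF mono \<open>a \<le> f a\<close>] below[OF \<open>a \<le> b\<close> \<open>f b \<le> b\<close>]
    by (rule incseq_bounded_convergent_vec)
  then obtain L where lim: "(\<lambda>t. (f ^^ t) a) \<longlonglongrightarrow> L" by (auto simp: convergent_def)
  show thesis
  proof (rule that[OF lim])
    show "f L = L" using cont lim by (rule fixpoint_of_limit_of_iterates)
    show "L \<le> z" if "a \<le> z" and "f z \<le> z" for z
      using lim below[OF that] by (rule LIMSEQ_le_eucl)
  qed
qed

lemma greatest_fixpoint_as_limit_of_iterates:
  fixes f :: "real^'n \<Rightarrow> real^'n"
  assumes mono: "mono f" and cont: "\<And>x. isCont f x"
    and "f b \<le> b" and "a \<le> b" and "a \<le> f a"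
  obtains U where "(\<lambda>t. (f ^^ t) b) \<longlonglongrightarrow> U" and "f U = U"
    and "\<And>z. z \<le> b \<Longrightarrow> z \<le> f z \<Longrightarrow> z \<le> U"
proof -
  have above: "z \<le> (f ^^ t) b" if "z \<le> b" and "z \<le> f z" for t z
    using mono that by (rule funpow_ge_postfixpoint)
  have "convergent (\<lambda>t. (f ^^ t) b)"
    using decseq_funpow[OF mono \<open>f b \<le> b\<close>] above[OF \<open>a \<le> b\<close> \<open>a \<le> f a\<close>]
    by (rule decseq_bounded_convergent_vec)
  then obtain U where lim: "(\<lambda>t. (f ^^ t) b) \<longlonglongrightarrow> U" by (auto simp: convergent_def)
  show thesis
  proof (rule that[OF lim])
    show "f U = U" using cont lim by (rule fixpoint_of_limit_of_iterates)
    show "z \<le> U" if "z \<le> b" and "z \<le> f z" for z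
      using lim above[OF that] by (rule LIMSEQ_ge_eucl)
  qed
qed

lemma matrix_vector_mult_mono:
  fixes A :: "real^'m^'n"
  assumes "\<forall>i j. 0 \<le> A $ i $ j" and "x \<le> y"
  shows "A *v x \<le> A *v y"
  using assms unfolding less_eq_vec_def matrix_vector_mult_def
  by (auto intro!: sum_mono mult_left_mono)

lemma sat0_mono: "x \<le> y \<Longrightarrow> sat0 w x \<le> sat0 w y"
  unfolding sat0_def less_eq_vec_def vec_lambda_beta by (meson max.mono min.mono order_refl)

lemma dyn_mono:
  assumes "\<forall>i j. 0 \<le> P $ i $ j" and "x \<le> y" and "c \<le> c'"
  shows "dyn P w c x \<le> dyn P w c' y"
proof -
  have "transpose P *v x \<le> transpose P *v y"
    using assms(1,2) by (intro matrix_vector_mult_mono) (simp add: transpose_def)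
  then show ?thesis unfolding dyn_def using assms(3) by (intro sat0_mono add_mono)
qed

lemma dyn_in_box: "0 \<le> w \<Longrightarrow> dyn P w c x \<in> {0..w}"
  by (simp add: dyn_def sat0_def less_eq_vec_def)

lemma equilibriaD: "x \<in> equilibria P w c \<Longrightarrow> dyn P w c x = x"
  by (simp add: equilibria_def)

lemma equilibria_subset_box:
  assumes "0 \<le> w"
  shows "equilibria P w c \<subseteq> {0..w}"
  using dyn_in_box[OF assms] equilibriaD by (metis subsetI)

lemma isCont_dyn: "isCont (dyn P w c) x"
  unfolding dyn_def sat0_def isCont_def
  by (intro tendsto_intros isCont_tendsto_compose[OF matrix_vector_mult_linear_continuous_at]
      tendsto_ident_at)

lemma mono_dyn: "\<forall>i j. 0 \<le> P $ i $ j \<Longrightarrow> mono (dyn P w c)"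
  by (rule monoI) (simp add: dyn_mono)

lemma
  fixes P :: "real^'n^'n"
  assumes P: "\<forall>i j. 0 \<le> P $ i $ j" and w: "0 \<le> w"
  shows tendsto_min_eq: "(\<lambda>t. (dyn P w c ^^ t) 0) \<longlonglongrightarrow> min_eq P w c"
    and min_eq_in_equilibria: "min_eq P w c \<in> equilibria P w c"
    and min_eq_lowerbound: "\<And>z. 0 \<le> z \<Longrightarrow> dyn P w c z \<le> z \<Longrightarrow> min_eq P w c \<le> z"
    and min_eq_least: "\<forall>x \<in> equilibria P w c. min_eq P w c \<le> x"
proof -
  have box: "dyn P w c x \<in> {0..w}" for x using w by (rule dyn_in_box)
  obtain L where lim: "(\<lambda>t. (dyn P w c ^^ t) 0) \<longlonglongrightarrow> L" and fixed: "dyn P w c L = L"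
    and least: "\<And>z. 0 \<le> z \<Longrightarrow> dyn P w c z \<le> z \<Longrightarrow> L \<le> z"
    by (rule least_fixpoint_as_limit_of_iterates[where a = 0 and b = w, OF mono_dyn[OF P] isCont_dyn])
      (use box w in auto)
  have below_equilibria: "L \<le> y" if "y \<in> equilibria P w c" for y
    using subsetD[OF equilibria_subset_box[OF w] that] equilibriaD[OF that] by (intro least) auto
  have "min_eq P w c = L"
    unfolding min_eq_def using fixed below_equilibria
    by (intro Least_equality) (simp_all add: equilibria_def)
  then show "(\<lambda>t. (dyn P w c ^^ t) 0) \<longlonglongrightarrow> min_eq P w c"
    and "min_eq P w c \<in> equilibria P w c"
    and "\<And>z. 0 \<le> z \<Longrightarrow> dyn P w c z \<le> z \<Longrightarrow> min_eq P w c \<le> z"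
    and "\<forall>x \<in> equilibria P w c. min_eq P w c \<le> x"
    using lim fixed least below_equilibria by (simp_all add: equilibria_def)
qed

lemma
  fixes P :: "real^'n^'n"
  assumes P: "\<forall>i j. 0 \<le> P $ i $ j" and w: "0 \<le> w"
  shows tendsto_max_eq: "(\<lambda>t. (dyn P w c ^^ t) w) \<longlonglongrightarrow> max_eq P w c"
    and max_eq_in_equilibria: "max_eq P w c \<in> equilibria P w c"
    and max_eq_upperbound: "\<And>z. z \<le> w \<Longrightarrow> z \<le> dyn P w c z \<Longrightarrow> z \<le> max_eq P w c"
    and max_eq_greatest: "\<forall>x \<in> equilibria P w c. x \<le> max_eq P w c"
proof -
  have box: "dyn P w c x \<in> {0..w}" for x using w by (rule dyn_in_box)
  obtain U where lim: "(\<lambda>t. (dyn P w c ^^ t) w) \<longlonglongrightarrow> U" and fixed: "dyn P w c U = U"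
    and greatest: "\<And>z. z \<le> w \<Longrightarrow> z \<le> dyn P w c z \<Longrightarrow> z \<le> U"
    by (rule greatest_fixpoint_as_limit_of_iterates[where a = 0 and b = w, OF mono_dyn[OF P] isCont_dyn])
      (use box w in auto)
  have above_equilibria: "y \<le> U" if "y \<in> equilibria P w c" for y
    using subsetD[OF equilibria_subset_box[OF w] that] equilibriaD[OF that] by (intro greatest) auto
  have "max_eq P w c = U"
    unfolding max_eq_def using fixed above_equilibria
    by (intro Greatest_equality) (simp_all add: equilibria_def)
  then show "(\<lambda>t. (dyn P w c ^^ t) w) \<longlonglongrightarrow> max_eq P w c"
    and "max_eq P w c \<in> equilibria P w c"
    and "\<And>z. z \<le> w \<Longrightarrow> z \<le> dyn P w c z \<Longrightarrow> z \<le> max_eq P w c"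
    and "\<forall>x \<in> equilibria P w c. x \<le> max_eq P w c"
    using lim fixed greatest above_equilibria by (simp_all add: equilibria_def)
qed

lemma mono_min_eq:
  fixes P :: "real^'n^'n"
  assumes P: "\<forall>i j. 0 \<le> P $ i $ j" and w: "0 \<le> w"
  shows "mono (min_eq P w)"
proof (rule monoI)
  fix c c' :: "real^'n"
  assume "c \<le> c'"
  let ?z = "min_eq P w c'"
  have eq: "?z \<in> equilibria P w c'" using P w by (rule min_eq_in_equilibria)
  have "dyn P w c ?z \<le> dyn P w c' ?z" using P order_refl \<open>c \<le> c'\<close> by (rule dyn_mono)
  also have "\<dots> = ?z" using eq by (rule equilibriaD)
  finally show "min_eq P w c \<le> ?z"
    using subsetD[OF equilibria_subset_box[OF w] eq] by (intro min_eq_lowerbound[OF P w]) auto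
qed

lemma mono_max_eq:
  fixes P :: "real^'n^'n"
  assumes P: "\<forall>i j. 0 \<le> P $ i $ j" and w: "0 \<le> w"
  shows "mono (max_eq P w)"
proof (rule monoI)
  fix c c' :: "real^'n"
  assume "c \<le> c'"
  let ?z = "max_eq P w c"
  have eq: "?z \<in> equilibria P w c" using P w by (rule max_eq_in_equilibria)
  have "?z = dyn P w c ?z" using eq by (rule equilibriaD[symmetric])
  also have "\<dots> \<le> dyn P w c' ?z" using P order_refl \<open>c \<le> c'\<close> by (rule dyn_mono)
  finally show "?z \<le> max_eq P w c'"
    using subsetD[OF equilibria_subset_box[OF w] eq] by (intro max_eq_upperbound[OF P w]) auto
qed

theorem proposition1:
  fixes P :: "real^'n^'n" and w c :: "real^'n"
  assumes "sub_stochastic P" and "0 \<le> w"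
  shows "min_eq P w c \<in> equilibria P w c \<and> (\<forall>x \<in> equilibria P w c. min_eq P w c \<le> x)
    \<and> max_eq P w c \<in> equilibria P w c \<and> (\<forall>x \<in> equilibria P w c. x \<le> max_eq P w c)
    \<and> (\<forall>x :: nat \<Rightarrow> real^'n. x 0 = 0 \<and> (\<forall>t. x (Suc t) = dyn P w c (x t))
          \<longrightarrow> x \<longlonglongrightarrow> min_eq P w c)
    \<and> (\<forall>x :: nat \<Rightarrow> real^'n. x 0 = w \<and> (\<forall>t. x (Suc t) = dyn P w c (x t))
          \<longrightarrow> x \<longlonglongrightarrow> max_eq P w c)
    \<and> mono (\<lambda>c'. min_eq P w c') \<and> mono (\<lambda>c'. max_eq P w c')
    \<and> (\<forall>c'. min_eq P w c' \<in> {0..w} \<and> max_eq P w c' \<in> {0..w})"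
proof -
  have P: "\<forall>i j. 0 \<le> P $ i $ j" using assms(1) by (simp add: sub_stochastic_def)
  note w = assms(2)
  have from_zero: "\<forall>x. x 0 = 0 \<and> (\<forall>t. x (Suc t) = dyn P w c (x t)) \<longrightarrow> x \<longlonglongrightarrow> min_eq P w c"
    using tendsto_min_eq[OF P w] recursive_seq_eq_funpow[where a = 0 and f = "dyn P w c"] by metis
  have from_w: "\<forall>x. x 0 = w \<and> (\<forall>t. x (Suc t) = dyn P w c (x t)) \<longrightarrow> x \<longlonglongrightarrow> max_eq P w c"
    using tendsto_max_eq[OF P w] recursive_seq_eq_funpow[where a = w and f = "dyn P w c"] by metis
  have box: "\<forall>c'. min_eq P w c' \<in> {0..w} \<and> max_eq P w c' \<in> {0..w}"
    using min_eq_in_equilibria[OF P w] max_eq_in_equilibria[OF P w] equilibria_subset_box[OF w]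
    by blast
  show ?thesis
    using min_eq_in_equilibria[OF P w] min_eq_least[OF P w]
      max_eq_in_equilibria[OF P w] max_eq_greatest[OF P w]
      from_zero from_w mono_min_eq[OF P w] mono_max_eq[OF P w] box
    by (intro conjI)
qed

end
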